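(* Let $n,k,r$ be integers with $k,r\geq 2$, $n\geq 2k$ and $k<r$. Then every vertex-$k$-maximal $r$-uniform hypergraph $H$ on $n$ vertices satisfies $|E(H)|\leq \binom{n}{r}-\binom{n-k}{r}$ (which equals $\binom{n}{r}-\binom{n-k}{r}+(\frac{n}{k}-2)\binom{k}{r}$ since $\binom{k}{r}=0$).
   Context: Binomial coefficients satisfy $\binom{a}{b}=0$ when $b>a$. A hypergraph $H=(V,E)$ consists of a finite vertex set $V$ and a set $E$ of non-empty subsets of $V$ (edges); it is $r$-uniform if all edges have exactly $r$ elements. The complement $H^c$ has as edges the $r$-subsets of $V$ not in $E$. A subhypergraph is $H'=(V',E')$ with $V'\subseteq V$, $E'\subseteq E$. $H+e=(V,E\cup\{e\})$ for $e\in E(H^c)$. $H-Y$ is the hypergraph induced on $V\setminus Y$ (keeping edges contained in $V\setminus Y$). Connectedness is defined via paths (alternating sequences of distinct vertices and distinct edges with consecutive vertices in the intermediate edge). A vertex-cut is a set $X$ with $H-X$ disconnected. $\kappa(H)$ is the minimum size of a vertex-cut if one exists, and $|V(H)|-1$ otherwise. $\overline{\kappa}(H)=\max\{\kappa(H'): H'\subseteq H\}$. An $r$-uniform hypergraph $H$ is vertex-$k$-maximal if $\overline{\kappa}(H)\leq k$ but $\overline{\kappa}(H+e)\geq k+1$ for every $e\in E(H^c)$. *)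

theory Defs
  imports Main
begin

definition hypergraph :: "'a set \<Rightarrow> 'a set set \<Rightarrow> bool" where
  "hypergraph V E \<longleftrightarrow> finite V \<and> (\<forall>e\<in>E. e \<noteq> {} \<and> e \<subseteq> V)"

definition uniform :: "nat \<Rightarrow> 'a set \<Rightarrow> 'a set set \<Rightarrow> bool" where
  "uniform r V E \<longleftrightarrow> hypergraph V E \<and> (\<forall>e\<in>E. card e = r)"

definition non_edges :: "nat \<Rightarrow> 'a set \<Rightarrow> 'a set set \<Rightarrow> 'a set set" where
  "non_edges r V E = {e. e \<subseteq> V \<and> card e = r \<and> e \<notin> E}"

definition is_path :: "'a set set \<Rightarrow> 'a list \<Rightarrow> 'a set list \<Rightarrow> bool" where
  "is_path E vs es \<longleftrightarrow> vs \<noteq> [] \<and> length es + 1 = length vs \<and> distinct vs \<and> distinct es \<and>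
     set es \<subseteq> E \<and> (\<forall>i < length es. vs ! i \<in> es ! i \<and> vs ! (Suc i) \<in> es ! i)"

definition connected_hg :: "'a set \<Rightarrow> 'a set set \<Rightarrow> bool" where
  "connected_hg V E \<longleftrightarrow> (\<forall>x\<in>V. \<forall>y\<in>V. \<exists>vs es. is_path E vs es \<and> hd vs = x \<and> last vs = y)"

definition del_verts_E :: "'a set \<Rightarrow> 'a set set \<Rightarrow> 'a set \<Rightarrow> 'a set set" where
  "del_verts_E V E Y = {e \<in> E. e \<subseteq> V - Y}"

definition vertex_cut :: "'a set \<Rightarrow> 'a set set \<Rightarrow> 'a set \<Rightarrow> bool" where
  "vertex_cut V E X \<longleftrightarrow> X \<subseteq> V \<and> \<not> connected_hg (V - X) (del_verts_E V E X)"

definition kappa :: "'a set \<Rightarrow> 'a set set \<Rightarrow> nat" where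
  "kappa V E = (if \<exists>X. vertex_cut V E X then Min {card X | X. vertex_cut V E X}
                else card V - 1)"

definition subhypergraph :: "'a set \<Rightarrow> 'a set set \<Rightarrow> 'a set \<Rightarrow> 'a set set \<Rightarrow> bool" where
  "subhypergraph V' E' V E \<longleftrightarrow> V' \<subseteq> V \<and> E' \<subseteq> E \<and> hypergraph V' E'"

definition kappa_bar :: "'a set \<Rightarrow> 'a set set \<Rightarrow> nat" where
  "kappa_bar V E = Max {kappa V' E' | V' E'. subhypergraph V' E' V E}"

definition vertex_k_maximal :: "nat \<Rightarrow> nat \<Rightarrow> 'a set \<Rightarrow> 'a set set \<Rightarrow> bool" where
  "vertex_k_maximal k r V E \<longleftrightarrow> uniform r V E \<and> kappa_bar V E \<le> k \<and>
     (\<forall>e \<in> non_edges r V E. kappa_bar V (insert e E) \<ge> k + 1)"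

end

theory Submission
  imports Defs
begin

text \<open>By induction on \<open>|V|\<close>, such a hypergraph has at least
  \<open>C(|V| - k, r)\<close> non-edges. If \<open>|V| \<ge> k + 2\<close>, there is a vertex cut \<open>X\<close> with
  \<open>|X| \<le> k < r\<close>, and \<open>V - X\<close> splits into nonempty parts \<open>A\<close>, \<open>B\<close> with no edge meeting both.
  The non-edges inside \<open>A \<union> X\<close>, those inside \<open>B \<union> X\<close>, and the \<open>r\<close>-subsets of \<open>A \<union> B\<close>
  meeting both parts are pairwise disjoint non-edges, since an \<open>r\<close>-set inside both \<open>A \<union> X\<close>
  and \<open>B \<union> X\<close> would lie in \<open>X\<close>. With \<open>a = |A|\<close>, \<open>b = |B|\<close>, \<open>d = k - |X|\<close>, the induction
  hypothesis thus yields \<open>C(a-d,r) + C(b-d,r) + C(a+b,r) - C(a,r) - C(b,r) \<ge> C(a+b-d,r)\<close>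
  non-edges, and \<open>a + b - d = |V| - k\<close>.\<close>

lemma binomial_superadditive:
  assumes "s \<ge> 1" shows "(p choose s) + (q choose s) \<le> (p + q) choose s"
proof (induction q)
  case 0 then show ?case using assms by simp
next
  case (Suc q)
  obtain t where t: "s = Suc t" using assms by (cases s) auto
  have "q choose t \<le> (p + q) choose t" by (rule binomial_right_mono) simp
  then show ?case using Suc by (simp add: t)
qed

lemma binomial_decrement_superadditive:
  assumes "r \<ge> 2"
  shows "(a + b - d choose r) + (a choose r) + (b choose r)
     \<le> (a - d choose r) + (b - d choose r) + (a + b choose r)"
proof (induction d)
  case 0 then show ?case by simp
next
  case (Suc d)
  obtain s where s: "r = Suc s" "s \<ge> 1" using assms by (cases r) auto
  have pascal: "m - d choose r = (m - Suc d choose r) + (m - Suc d choose s)" for m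
  proof (cases "m - d")
    case (Suc j)
    then have "m - Suc d = j" by simp
    then show ?thesis using Suc s(1) by simp
  qed (use s in simp)
  have "(a - Suc d choose s) + (b - Suc d choose s) \<le> (a - Suc d) + (b - Suc d) choose s"
    using binomial_superadditive s by blast
  also have "\<dots> \<le> a + b - Suc d choose s" by (rule binomial_right_mono) arith
  finally show ?case using Suc pascal[of a] pascal[of b] pascal[of "a + b"] by linarith
qed

definition reachable :: "'a set set \<Rightarrow> 'a \<Rightarrow> 'a \<Rightarrow> bool" where
  "reachable E x y \<longleftrightarrow> (\<exists>vs es. is_path E vs es \<and> hd vs = x \<and> last vs = y)"

lemma connected_hg_iff_reachable:
  "connected_hg V E \<longleftrightarrow> (\<forall>x\<in>V. \<forall>y\<in>V. reachable E x y)"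
  unfolding connected_hg_def reachable_def ..

lemma reachable_refl: "reachable E x x"
  unfolding reachable_def is_path_def by (intro exI[of _ "[x]"] exI[of _ "[]"]) simp

lemma is_path_take:
  assumes "is_path E vs es" "i < length vs"
  shows "is_path E (take (Suc i) vs) (take i es)"
    and "hd (take (Suc i) vs) = hd vs" "last (take (Suc i) vs) = vs ! i"
proof -
  have len: "length vs = length es + 1" "vs \<noteq> []" using assms(1) unfolding is_path_def by auto
  show "is_path E (take (Suc i) vs) (take i es)"
    using assms len unfolding is_path_def by (auto simp: min_def dest: in_set_takeD)
  show "hd (take (Suc i) vs) = hd vs" using len by (simp add: hd_take)
  show "last (take (Suc i) vs) = vs ! i" using assms(2) by (simp add: take_Suc_conv_app_nth)
qed

lemma is_path_snoc:
  assumes "is_path E vs es" "last vs \<in> e" "w \<in> e" "w \<notin> set vs" "e \<in> E" "e \<notin> set es"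
  shows "is_path E (vs @ [w]) (es @ [e])"
proof -
  have len: "length vs = length es + 1" "vs \<noteq> []" using assms(1) unfolding is_path_def by auto
  have last: "last vs = vs ! length es" using len by (simp add: last_conv_nth)
  have "(vs @ [w]) ! i \<in> (es @ [e]) ! i \<and> (vs @ [w]) ! Suc i \<in> (es @ [e]) ! i"
    if "i < length (es @ [e])" for i
  proof (cases "i < length es")
    case True then show ?thesis using assms(1) len unfolding is_path_def by (auto simp: nth_append)
  next
    case False
    then have "i = length es" using that by simp
    then show ?thesis using len last assms(2,3) by (simp add: nth_append)
  qed
  then show ?thesis using assms len unfolding is_path_def by auto
qed

text \<open>Truncate the path at a vertex of \<open>e\<close> reached before \<open>e\<close> itself is used (where \<open>e\<close>
  occurs on the path, or else at \<open>u\<close>), then append \<open>e\<close>.\<close>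

lemma reachable_edge_step:
  assumes "reachable E x u" "e \<in> E" "u \<in> e" "w \<in> e"
  shows "reachable E x w"
proof -
  obtain vs es where p: "is_path E vs es" "hd vs = x" "last vs = u"
    using assms(1) unfolding reachable_def by blast
  have len: "length vs = length es + 1" "vs \<noteq> []" using p(1) unfolding is_path_def by auto
  show ?thesis
  proof (cases "w \<in> set vs")
    case True
    then obtain i where "i < length vs" "vs ! i = w" by (auto simp: in_set_conv_nth)
    then show ?thesis using is_path_take[OF p(1)] p(2) unfolding reachable_def by metis
  next
    case False
    obtain i where i: "i < length vs" "vs ! i \<in> e" "e \<notin> set (take i es)"
    proof (cases "e \<in> set es")
      case True
      then obtain i where i: "i < length es" "es ! i = e" by (auto simp: in_set_conv_nth)
      have "distinct es" using p(1) unfolding is_path_def by simp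
      then have "e \<notin> set (take i es)"
        using i by (auto simp: in_set_conv_nth nth_eq_iff_index_eq)
      moreover have "vs ! i \<in> e" using p(1) i unfolding is_path_def by auto
      ultimately show ?thesis using that[of i] i len by simp
    next
      case False
      have "vs ! length es = u" using p(3) len by (simp add: last_conv_nth)
      then show ?thesis using that[of "length es"] len False assms(3) by (auto dest: in_set_takeD)
    qed
    let ?vs = "take (Suc i) vs" and ?es = "take i es"
    have prefix: "is_path E ?vs ?es" "hd ?vs = x" "last ?vs = vs ! i"
      using is_path_take[OF p(1) i(1)] p(2) by simp_all
    have "w \<notin> set ?vs" using False by (auto dest: in_set_takeD)
    then have "is_path E (?vs @ [w]) (?es @ [e])"
      using is_path_snoc[OF prefix(1) _ assms(4) _ assms(2) i(3)] prefix(3) i(2) by simp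
    moreover have "?vs \<noteq> []" using len by simp
    ultimately show ?thesis unfolding reachable_def using prefix(2) by fastforce
  qed
qed

lemma vertex_cut_separation:
  assumes "vertex_cut V E X"
  obtains A B where "A \<union> B = V - X" "A \<inter> B = {}" "A \<noteq> {}" "B \<noteq> {}"
    and "\<And>e. e \<in> E \<Longrightarrow> e \<subseteq> V - X \<Longrightarrow> e \<subseteq> A \<or> e \<subseteq> B"
proof -
  define F where "F = del_verts_E V E X"
  obtain x y where xy: "x \<in> V - X" "y \<in> V - X" "\<not> reachable F x y"
    using assms unfolding vertex_cut_def connected_hg_iff_reachable F_def by blast
  define A where "A = {v \<in> V - X. reachable F x v}"
  have closed: "e \<subseteq> A" if "e \<in> E" "e \<subseteq> V - X" "u \<in> e" "u \<in> A" for e u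
  proof
    fix w assume "w \<in> e"
    have "e \<in> F" using that(1,2) unfolding F_def del_verts_E_def by simp
    moreover have "reachable F x u" using that(4) unfolding A_def by simp
    ultimately have "reachable F x w" using reachable_edge_step that(3) \<open>w \<in> e\<close> by metis
    then show "w \<in> A" using that(2) \<open>w \<in> e\<close> unfolding A_def by blast
  qed
  show ?thesis
  proof (rule that[of A "V - X - A"])
    have "x \<in> A" unfolding A_def using xy(1) reachable_refl by simp
    then show "A \<noteq> {}" by blast
    show "V - X - A \<noteq> {}" using xy(2,3) unfolding A_def by blast
    show "e \<subseteq> A \<or> e \<subseteq> V - X - A" if "e \<in> E" "e \<subseteq> V - X" for e
      using closed[OF that] that(2) by blast
    show "A \<union> (V - X - A) = V - X" "A \<inter> (V - X - A) = {}" unfolding A_def by blast+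
  qed
qed

lemma vertex_cut_cards_subset:
  assumes "hypergraph V E"
  shows "{card X | X. vertex_cut V E X} \<subseteq> {0..card V}"
  using assms unfolding hypergraph_def vertex_cut_def by (auto intro: card_mono)

lemma kappa_attained:
  assumes "hypergraph V E" "vertex_cut V E X"
  obtains Y where "vertex_cut V E Y" "card Y = kappa V E"
proof -
  let ?S = "{card X | X. vertex_cut V E X}"
  have "finite ?S" using vertex_cut_cards_subset[OF assms(1)] by (rule finite_subset) simp
  moreover have "?S \<noteq> {}" using assms(2) by blast
  ultimately have "Min ?S \<in> ?S" by (rule Min_in)
  moreover have "kappa V E = Min ?S" using assms(2) unfolding kappa_def by auto
  ultimately show ?thesis using that by auto
qed

lemma kappa_le_card:
  assumes "hypergraph V E" shows "kappa V E \<le> card V"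
proof (cases "\<exists>X. vertex_cut V E X")
  case True
  then obtain Y where "vertex_cut V E Y" "card Y = kappa V E" using kappa_attained[OF assms] by blast
  then show ?thesis using vertex_cut_cards_subset[OF assms] by force
qed (simp add: kappa_def)

lemma small_cut_exists:
  assumes "hypergraph V E" "kappa V E \<le> k" "card V \<ge> k + 2"
  obtains X where "vertex_cut V E X" "card X \<le> k"
proof (cases "\<exists>X. vertex_cut V E X")
  case True
  then show ?thesis using kappa_attained[OF assms(1)] that assms(2) by metis
next
  case False
  then show ?thesis using assms(2,3) by (simp add: kappa_def)
qed

definition kappa_hereditarily_le :: "nat \<Rightarrow> 'a set \<Rightarrow> 'a set set \<Rightarrow> bool" where
  "kappa_hereditarily_le k V E \<longleftrightarrow> (\<forall>V' E'. subhypergraph V' E' V E \<longrightarrow> kappa V' E' \<le> k)"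

lemma kappa_hereditarily_le_if_kappa_bar_le:
  assumes "hypergraph V E" "kappa_bar V E \<le> k"
  shows "kappa_hereditarily_le k V E"
  unfolding kappa_hereditarily_le_def
proof (intro allI impI)
  fix V' E' assume sub: "subhypergraph V' E' V E"
  let ?K = "{kappa V' E' | V' E'. subhypergraph V' E' V E}"
  have "?K \<subseteq> {0..card V}"
  proof
    fix t assume "t \<in> ?K"
    then obtain V1 E1 where t: "t = kappa V1 E1" "subhypergraph V1 E1 V E" by blast
    have "t \<le> card V1" using t kappa_le_card[of V1 E1] unfolding subhypergraph_def by simp
    also have "card V1 \<le> card V"
      using t(2) assms(1) unfolding subhypergraph_def hypergraph_def by (simp add: card_mono)
    finally show "t \<in> {0..card V}" by simp
  qed
  then have "finite ?K" by (rule finite_subset) simp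
  moreover have "kappa V' E' \<in> ?K" using sub by blast
  ultimately have "kappa V' E' \<le> Max ?K" by (rule Max_ge)
  then show "kappa V' E' \<le> k" using assms(2) unfolding kappa_bar_def by simp
qed

lemma hypergraph_induced:
  assumes "hypergraph V E" "S \<subseteq> V"
  shows "hypergraph S {e \<in> E. e \<subseteq> S}"
  using assms unfolding hypergraph_def by (auto intro: finite_subset)

lemma kappa_hereditarily_le_induced:
  assumes "kappa_hereditarily_le k V E" "S \<subseteq> V"
  shows "kappa_hereditarily_le k S {e \<in> E. e \<subseteq> S}"
  unfolding kappa_hereditarily_le_def
proof (intro allI impI)
  fix V' E' assume "subhypergraph V' E' S {e \<in> E. e \<subseteq> S}"
  then have "subhypergraph V' E' V E" using assms(2) unfolding subhypergraph_def by blast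
  then show "kappa V' E' \<le> k" using assms(1) unfolding kappa_hereditarily_le_def by blast
qed

definition card_subsets :: "nat \<Rightarrow> 'a set \<Rightarrow> 'a set set" where
  "card_subsets r S = {e. e \<subseteq> S \<and> card e = r}"

lemma finite_card_subsets: "finite S \<Longrightarrow> finite (card_subsets r S)"
  unfolding card_subsets_def by (rule finite_subset[of _ "Pow S"]) auto

lemma card_card_subsets: "finite S \<Longrightarrow> card (card_subsets r S) = card S choose r"
  unfolding card_subsets_def by (rule n_subsets)

lemma non_edges_eq: "non_edges r V E = card_subsets r V - E"
  unfolding non_edges_def card_subsets_def by auto

lemma non_edges_induced: "non_edges r S {e \<in> E. e \<subseteq> S} = non_edges r S E"
  unfolding non_edges_def by auto

lemma non_edges_mono: "S \<subseteq> T \<Longrightarrow> non_edges r S E \<subseteq> non_edges r T E"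
  unfolding non_edges_def by auto

lemma card_crossing_subsets:
  assumes "finite A" "finite B" "A \<inter> B = {}" "r > 0"
  shows "card (card_subsets r (A \<union> B) - (card_subsets r A \<union> card_subsets r B))
           + (card A choose r) + (card B choose r) = card A + card B choose r"
proof -
  let ?RA = "card_subsets r A" and ?RB = "card_subsets r B"
  have disj: "?RA \<inter> ?RB = {}"
  proof -
    have "e \<notin> ?RA \<inter> ?RB" for e
    proof
      assume "e \<in> ?RA \<inter> ?RB"
      then have "e = {}" "card e = r" using assms(3) unfolding card_subsets_def by auto
      then show False using assms(4) by simp
    qed
    then show ?thesis by blast
  qed
  have sub: "?RA \<union> ?RB \<subseteq> card_subsets r (A \<union> B)"
    unfolding card_subsets_def by auto
  have fin: "finite ?RA" "finite ?RB" using assms(1,2) by (simp_all add: finite_card_subsets)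
  have "card (card_subsets r (A \<union> B) - (?RA \<union> ?RB))
          = card (card_subsets r (A \<union> B)) - card (?RA \<union> ?RB)"
    using sub fin by (simp add: card_Diff_subset)
  moreover have "card (?RA \<union> ?RB) = (card A choose r) + (card B choose r)"
    using disj fin assms(1,2) by (simp add: card_Un_disjoint card_card_subsets)
  moreover have "card (?RA \<union> ?RB) \<le> card (card_subsets r (A \<union> B))"
    using sub assms(1,2) by (simp add: card_mono finite_card_subsets)
  moreover have "card (card_subsets r (A \<union> B)) = card A + card B choose r"
    using assms(1-3) by (simp add: card_card_subsets card_Un_disjoint)
  ultimately show ?thesis by linarith
qed

lemma card_non_edges_separated:
  assumes fin: "finite A" "finite B" "finite X"
    and disj: "A \<inter> B = {}" "A \<inter> X = {}" "B \<inter> X = {}"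
    and small: "card X < r"
    and sep: "\<And>e. e \<in> E \<Longrightarrow> e \<subseteq> A \<union> B \<Longrightarrow> e \<subseteq> A \<or> e \<subseteq> B"
  shows "card (non_edges r (A \<union> X) E) + card (non_edges r (B \<union> X) E)
           + (card A + card B choose r)
         \<le> card (non_edges r (A \<union> B \<union> X) E) + (card A choose r) + (card B choose r)"
proof -
  define N1 where "N1 = non_edges r (A \<union> X) E"
  define N2 where "N2 = non_edges r (B \<union> X) E"
  define N3 where "N3 = card_subsets r (A \<union> B) - (card_subsets r A \<union> card_subsets r B)"
  define M where "M = non_edges r (A \<union> B \<union> X) E"
  have "N1 \<inter> N2 = {}"
  proof -
    have "e \<notin> N1 \<inter> N2" for e
    proof
      assume "e \<in> N1 \<inter> N2"
      then have "e \<subseteq> X" "card e = r" using disj(1) unfolding N1_def N2_def non_edges_def by auto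
      then have "r \<le> card X" using card_mono[OF fin(3)] by metis
      then show False using small by simp
    qed
    then show ?thesis by blast
  qed
  moreover have "(N1 \<union> N2) \<inter> N3 = {}"
  proof -
    have "e \<notin> N3" if "e \<subseteq> A \<union> X \<or> e \<subseteq> B \<union> X" "card e = r" for e
    proof
      assume "e \<in> N3"
      then have "e \<subseteq> A \<union> B" "e \<notin> card_subsets r A" "e \<notin> card_subsets r B"
        unfolding N3_def card_subsets_def by auto
      then have "\<not> e \<subseteq> A" "\<not> e \<subseteq> B" using that(2) unfolding card_subsets_def by auto
      then show False using that(1) \<open>e \<subseteq> A \<union> B\<close> disj(2,3) by blast
    qed
    then show ?thesis unfolding N1_def N2_def non_edges_def by blast
  qed
  moreover have "N3 \<subseteq> M"
  proof
    fix e assume "e \<in> N3"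
    then have "e \<subseteq> A \<union> B" "card e = r" "\<not> e \<subseteq> A" "\<not> e \<subseteq> B"
      unfolding N3_def card_subsets_def by auto
    then show "e \<in> M" using sep unfolding M_def non_edges_def by blast
  qed
  moreover have "N1 \<subseteq> M" "N2 \<subseteq> M" unfolding N1_def N2_def M_def by (rule non_edges_mono; blast)+
  moreover have "finite M" using fin unfolding M_def by (simp add: non_edges_eq finite_card_subsets)
  ultimately have "card N1 + card N2 + card N3 \<le> card M"
    by (metis card_Un_disjoint card_mono finite_subset le_sup_iff)
  moreover have "r > 0" using small by simp
  then have "card N3 + (card A choose r) + (card B choose r) = card A + card B choose r"
    unfolding N3_def using card_crossing_subsets[OF fin(1,2) disj(1)] by blast
  ultimately show ?thesis unfolding N1_def N2_def M_def by linarith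
qed

lemma card_non_edges_ge:
  assumes "hypergraph V E" "kappa_hereditarily_le k V E" "k < r" "r \<ge> 2"
  shows "card V - k choose r \<le> card (non_edges r V E)"
  using assms(1,2)
proof (induction "card V" arbitrary: V E rule: less_induct)
  case less
  have finV: "finite V" using less.prems(1) unfolding hypergraph_def by simp
  show ?case
  proof (cases "card V \<le> k + 1")
    case True
    then show ?thesis using assms(3,4) by (simp add: binomial_eq_0)
  next
    case False
    have "subhypergraph V E V E" using less.prems(1) unfolding subhypergraph_def by simp
    then have "kappa V E \<le> k" using less.prems(2) unfolding kappa_hereditarily_le_def by blast
    moreover have "card V \<ge> k + 2" using False by simp
    ultimately obtain X where X: "vertex_cut V E X" "card X \<le> k"
      using small_cut_exists[OF less.prems(1)] by blast
    obtain A B where AB: "A \<union> B = V - X" "A \<inter> B = {}" "A \<noteq> {}" "B \<noteq> {}"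
      and sep: "\<And>e. e \<in> E \<Longrightarrow> e \<subseteq> V - X \<Longrightarrow> e \<subseteq> A \<or> e \<subseteq> B"
      using vertex_cut_separation[OF X(1)] by blast
    have V: "V = A \<union> B \<union> X" using AB(1) X(1) unfolding vertex_cut_def by blast
    have fin: "finite A" "finite B" "finite X" using finV V by auto
    have disj: "A \<inter> X = {}" "B \<inter> X = {}" using AB(1) by auto
    have IH: "card S - k choose r \<le> card (non_edges r S E)" if "S \<subset> V" for S
    proof -
      have "card S < card V" using psubset_card_mono[OF finV that] .
      from less.hyps[OF this hypergraph_induced[OF less.prems(1)]
          kappa_hereditarily_le_induced[OF less.prems(2)]]
      show ?thesis using that by (simp add: non_edges_induced)
    qed
    define d where "d = k - card X"
    have "A \<union> X \<subset> V" "B \<union> X \<subset> V" using V AB(2-4) disj by blast+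
    moreover have "card (A \<union> X) - k = card A - d" "card (B \<union> X) - k = card B - d"
      using fin disj X(2) unfolding d_def by (simp_all add: card_Un_disjoint)
    ultimately have IH_A: "card A - d choose r \<le> card (non_edges r (A \<union> X) E)"
      and IH_B: "card B - d choose r \<le> card (non_edges r (B \<union> X) E)"
      using IH by metis+
    have cardV: "card V - k = card A + card B - d"
      unfolding d_def using V fin AB(2) disj X(2) by (simp add: card_Un_disjoint Int_Un_distrib2)
    have "e \<subseteq> A \<or> e \<subseteq> B" if "e \<in> E" "e \<subseteq> A \<union> B" for e
      using sep that AB(1) by blast
    then have "card (non_edges r (A \<union> X) E) + card (non_edges r (B \<union> X) E)
           + (card A + card B choose r)
         \<le> card (non_edges r V E) + (card A choose r) + (card B choose r)"
      using card_non_edges_separated[OF fin AB(2) disj] X(2) assms(3) V by simp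
    then have "card A + card B - d choose r \<le> card (non_edges r V E)"
      using binomial_decrement_superadditive[OF assms(4), of "card A" "card B" d] IH_A IH_B
      by linarith
    then show ?thesis unfolding cardV .
  qed
qed

lemma card_non_edges_add_card_edges:
  assumes "uniform r V E"
  shows "card (non_edges r V E) + card E = card V choose r"
proof -
  have sub: "E \<subseteq> card_subsets r V" and "finite V"
    using assms unfolding uniform_def hypergraph_def card_subsets_def by auto
  have "finite (card_subsets r V)" using \<open>finite V\<close> by (rule finite_card_subsets)
  then have "card (card_subsets r V - E) + card E = card (card_subsets r V)"
    using sub by (metis card_Diff_subset card_mono finite_subset le_add_diff_inverse2)
  then show ?thesis using \<open>finite V\<close> by (simp add: non_edges_eq card_card_subsets)
qed

theorem theorem4p2:
  fixes n k r :: nat and V :: "'a set" and E :: "'a set set"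
  assumes "k \<ge> 2" and "r \<ge> 2" and "n \<ge> 2 * k" and "k < r"
    and "uniform r V E" and "card V = n"
    and "vertex_k_maximal k r V E"
  shows "card E \<le> (n choose r) - ((n - k) choose r)"
proof -
  have hyp: "hypergraph V E" using assms(5) unfolding uniform_def by simp
  have "kappa_bar V E \<le> k" using assms(7) unfolding vertex_k_maximal_def by simp
  then have "kappa_hereditarily_le k V E" by (rule kappa_hereditarily_le_if_kappa_bar_le[OF hyp])
  then have "n - k choose r \<le> card (non_edges r V E)"
    using card_non_edges_ge[OF hyp _ assms(4,2)] assms(6) by simp
  moreover have "card (non_edges r V E) + card E = n choose r"
    using card_non_edges_add_card_edges[OF assms(5)] assms(6) by simp
  ultimately show ?thesis by linarith
qed

end
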